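(* For $\mu_1,\mu_2\in\mathbb{C}$, the function $$\phi^B_{\mu_1,\mu_2}=\Big[\prod_{r=1}^n(z_r^{1/2}-z_r^{-1/2})^{\mu_1}\Big]\prod_{1\le i<j\le n}(z_i+z_i^{-1}-z_j-z_j^{-1})^{\mu_2}$$ (on any domain where the factors are nonzero and branches are fixed) satisfies $$\sum_{r=1}^n(z_r\partial_{z_r})^2(\phi^B_{\mu_1,\mu_2})+\Big[\mu_1(1-\mu_1)\sum_{r=1}^n\frac{z_r}{(z_r-1)^2}+2\mu_2(1-\mu_2)\Big(\sum_{1\le i<j\le n}\frac{z_iz_j}{(z_i-z_j)^2}+\sum_{1\le i<j\le n}\frac{z_iz_j}{(z_iz_j-1)^2}\Big)\Big]\phi^B_{\mu_1,\mu_2}$$ $$=\Big(\frac{n\mu_1^2}{4}+\frac{n(n-1)}{2}\mu_1\mu_2+\frac{n(n-1)(2n-1)\mu_2^2}{6}\Big)\phi^B_{\mu_1,\mu_2}.$$ *)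

theory Defs
  imports "HOL-Analysis.Analysis"
begin

text \<open>Points of C^n are vectors indexed by a finite linearly ordered type 'n (n = CARD('n)).\<close>

definition vupd :: "'a^'n \<Rightarrow> 'n \<Rightarrow> 'a \<Rightarrow> 'a^'n" where
  "vupd z r t = (\<chi> k. if k = r then t else z $ k)"

definition pdiff :: "'n \<Rightarrow> (complex^'n \<Rightarrow> complex) \<Rightarrow> complex^'n \<Rightarrow> complex" where
  "pdiff r F z = deriv (\<lambda>t. F (vupd z r t)) (z $ r)"

definition euler_op :: "'n \<Rightarrow> (complex^'n \<Rightarrow> complex) \<Rightarrow> complex^'n \<Rightarrow> complex" where
  "euler_op r F z = z $ r * pdiff r F z"

text \<open>Power with a fixed branch: w^mu = exp(mu * L) where L is the chosen logarithm of w.\<close>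

definition branch_pow :: "complex \<Rightarrow> complex \<Rightarrow> complex" where
  "branch_pow L mu = exp (mu * L)"

end

theory Submission
  imports Defs
begin

(* Write phi = exp (log phi) with log phi = mu1 * sum_r L_r + mu2 * sum_{i<j} M_ij.  For the Euler
   operator theta_r = z_r d/dz_r one has theta_r^2 (exp g) = exp g * ((theta_r g)^2 + theta_r^2 g),
   and since continuous logarithms differentiate like logarithms, theta_r log phi is the rational
   function mu1 (z_r + 1) / (2 (z_r - 1)) + mu2 sum_{j ~= r} (z_r - 1/z_r) / (w_r - w_j), where
   w = z + 1/z.  After summing over r, every cross term collapses by symmetrisation: pairs {i, j}
   contribute constants or the potential terms through two-term partial fraction identities, and
   the triple sum reduces to the three-term Lagrange interpolation identity. *)

section \<open>Sums over distinct indices\<close>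

lemma power2_sum_offdiag:
  fixes f :: "'i \<Rightarrow> 'a::comm_semiring_1"
  assumes "finite A"
  shows "(\<Sum>j\<in>A. f j)^2 = (\<Sum>j\<in>A. f j ^ 2) + (\<Sum>j\<in>A. \<Sum>k\<in>A - {j}. f j * f k)"
proof -
  have "(\<Sum>j\<in>A. f j)^2 = (\<Sum>j\<in>A. \<Sum>k\<in>A. f j * f k)"
    by (simp add: power2_eq_square sum_product)
  also have "\<dots> = (\<Sum>j\<in>A. f j ^ 2 + (\<Sum>k\<in>A - {j}. f j * f k))"
    using assms by (intro sum.cong refl) (simp add: sum.remove power2_eq_square)
  finally show ?thesis by (simp add: sum.distrib)
qed

lemma sum_Compl_eq_sum_if:
  fixes g :: "'n::finite \<Rightarrow> 'a::comm_monoid_add"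
  shows "(\<Sum>x\<in>-A. g x) = (\<Sum>x\<in>UNIV. if x \<in> A then 0 else g x)"
  by (simp add: sum.If_cases Compl_eq_Diff_UNIV)

lemma sum_offdiag_swap:
  fixes F :: "'n::finite \<Rightarrow> 'n \<Rightarrow> 'a::comm_monoid_add"
  shows "(\<Sum>i\<in>UNIV. \<Sum>j\<in>-{i}. F i j) = (\<Sum>i\<in>UNIV. \<Sum>j\<in>-{i}. F j i)"
  unfolding sum_Compl_eq_sum_if by (subst sum.swap) (intro sum.cong refl, auto)

lemma sum_offdiag_symmetric:
  fixes F :: "'n::finite \<Rightarrow> 'n \<Rightarrow> 'a::comm_semiring_1"
  assumes "\<And>i j. i \<noteq> j \<Longrightarrow> F i j + F j i = c"
  shows "2 * (\<Sum>i\<in>UNIV. \<Sum>j\<in>-{i}. F i j) = of_nat (CARD('n) * (CARD('n) - 1)) * c"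
proof -
  have "2 * (\<Sum>i\<in>UNIV. \<Sum>j\<in>-{i}. F i j) = (\<Sum>i\<in>UNIV. \<Sum>j\<in>-{i}. F i j + F j i)"
    using sum_offdiag_swap[of F] by (simp add: sum.distrib mult_2)
  also have "\<dots> = (\<Sum>i::'n\<in>UNIV. \<Sum>j\<in>-{i}. c)"
    using assms by (intro sum.cong refl) auto
  finally show ?thesis by (simp add: Compl_eq_Diff_UNIV card_Diff_singleton mult_ac)
qed

lemma sum_offdiag_eq_sum_pairs:
  fixes F :: "'n::{finite,linorder} \<Rightarrow> 'n \<Rightarrow> 'a::comm_monoid_add"
  shows "(\<Sum>i\<in>UNIV. \<Sum>j\<in>-{i}. F i j) = (\<Sum>(i, j)\<in>{(i, j). i < j}. F i j + F j i)"
proof -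
  have offdiag: "Sigma UNIV (\<lambda>i. -{i}) = {(i, j). i < j} \<union> prod.swap ` {(i, j::'n). i < j}"
    by (auto simp: image_iff antisym_conv3)
  have "(\<Sum>i\<in>UNIV. \<Sum>j\<in>-{i}. F i j) = (\<Sum>(i, j)\<in>Sigma UNIV (\<lambda>i. -{i}). F i j)"
    by (rule sum.Sigma) auto
  also have "\<dots> = (\<Sum>(i, j)\<in>{(i, j). i < j}. F i j) + (\<Sum>(i, j)\<in>prod.swap ` {(i, j). i < j}. F i j)"
    unfolding offdiag by (rule sum.union_disjoint) auto
  also have "(\<Sum>(i, j)\<in>prod.swap ` {(i, j). i < j}. F i j) = (\<Sum>(i, j)\<in>{(i, j). i < j}. F j i)"
    by (subst sum.reindex) (auto simp: case_prod_unfold)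
  finally show ?thesis by (simp add: sum.distrib case_prod_unfold)
qed

lemma sum_pairs_less_coordinate:
  fixes Y :: "'n::{finite,linorder} \<Rightarrow> 'n \<Rightarrow> 'a::ab_group_add"
  assumes "\<And>i j. Y j i = - Y i j"
  shows "(\<Sum>(i, j)\<in>{(i, j). i < j}. (if i = r then Y i j else 0) - (if j = r then Y i j else 0))
       = (\<Sum>j\<in>-{r}. Y r j)"
proof -
  have "(\<Sum>j\<in>-{r}. Y r j) = (\<Sum>i\<in>UNIV. \<Sum>j\<in>-{i}. if i = r then Y i j else 0)"
  proof -
    have "(\<Sum>j\<in>-{i}. if i = r then Y i j else 0) = (if i = r then \<Sum>j\<in>-{i}. Y i j else 0)" for i
      by simp
    then show ?thesis by (simp add: sum.delta')
  qed
  also have "\<dots> = (\<Sum>(i, j)\<in>{(i, j). i < j}. (if i = r then Y i j else 0) + (if j = r then Y j i else 0))"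
    by (rule sum_offdiag_eq_sum_pairs)
  also have "\<dots> = (\<Sum>(i, j)\<in>{(i, j). i < j}. (if i = r then Y i j else 0) - (if j = r then Y i j else 0))"
    by (intro sum.cong refl) (auto simp: assms[of _ r])
  finally show ?thesis ..
qed

lemma sum_rotate3:
  fixes f :: "'i \<Rightarrow> 'j \<Rightarrow> 'k \<Rightarrow> 'a::comm_monoid_add"
  shows "(\<Sum>r\<in>A. \<Sum>j\<in>B. \<Sum>k\<in>C. f r j k) = (\<Sum>j\<in>B. \<Sum>k\<in>C. \<Sum>r\<in>A. f r j k)"
  by (rule trans[OF sum.swap], rule sum.cong[OF refl], rule sum.swap)

lemma sum_distinct_triples_eq_sum_if:
  fixes G :: "'n::finite \<Rightarrow> 'n \<Rightarrow> 'n \<Rightarrow> 'a::comm_monoid_add"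
  shows "(\<Sum>r\<in>UNIV. \<Sum>j\<in>-{r}. \<Sum>k\<in>-{r}-{j}. G r j k)
       = (\<Sum>r\<in>UNIV. \<Sum>j\<in>UNIV. \<Sum>k\<in>UNIV. if distinct [r, j, k] then G r j k else 0)"
proof -
  have "(\<Sum>k\<in>-{r}-{j}. G r j k) = (\<Sum>k\<in>UNIV. if distinct [r, j, k] then G r j k else 0)"
    if "j \<noteq> r" for r j
  proof -
    have "-{r}-{j} = -{r, j}" by auto
    then have "(\<Sum>k\<in>-{r}-{j}. G r j k) = (\<Sum>k\<in>UNIV. if k \<in> {r, j} then 0 else G r j k)"
      by (simp only: sum_Compl_eq_sum_if)
    also have "\<dots> = (\<Sum>k\<in>UNIV. if distinct [r, j, k] then G r j k else 0)"
      using that by (intro sum.cong refl) auto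
    finally show ?thesis .
  qed
  then show ?thesis by (simp add: sum_Compl_eq_sum_if) (intro sum.cong refl, auto)
qed

lemma sum_distinct_triples_cyclic:
  fixes F :: "'n::finite \<Rightarrow> 'n \<Rightarrow> 'n \<Rightarrow> 'a::comm_semiring_1"
  assumes "\<And>r j k. r \<noteq> j \<Longrightarrow> r \<noteq> k \<Longrightarrow> j \<noteq> k \<Longrightarrow> F r j k + F j k r + F k r j = c"
  shows "3 * (\<Sum>r\<in>UNIV. \<Sum>j\<in>-{r}. \<Sum>k\<in>-{r}-{j}. F r j k)
       = of_nat (CARD('n) * (CARD('n) - 1) * (CARD('n) - 2)) * c"
proof -
  define T where "T G = (\<Sum>r\<in>UNIV. \<Sum>j\<in>UNIV. \<Sum>k\<in>UNIV. if distinct [r, j, k] then G r j k else 0)"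
    for G :: "'n \<Rightarrow> 'n \<Rightarrow> 'n \<Rightarrow> 'a"
  have T_rotate: "T (\<lambda>r j k. G j k r) = T G" for G
    unfolding T_def by (subst sum_rotate3) (intro sum.cong refl, auto)
  have "3 * (\<Sum>r\<in>UNIV. \<Sum>j\<in>-{r}. \<Sum>k\<in>-{r}-{j}. F r j k) = 3 * T F"
    unfolding T_def by (simp only: sum_distinct_triples_eq_sum_if)
  also have "\<dots> = T F + T (\<lambda>r j k. F j k r) + T (\<lambda>r j k. F k r j)"
    using T_rotate[of F] T_rotate[of "\<lambda>r j k. F j k r"]
    by (metis distrib_right mult_1 numeral_Bit1 numeral_One)
  also have "\<dots> = T (\<lambda>r j k. F r j k + F j k r + F k r j)"
    unfolding T_def by (simp only: sum.distrib[symmetric]) (intro sum.cong refl, simp)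
  also have "\<dots> = T (\<lambda>_ _ _. c)"
    unfolding T_def by (intro sum.cong refl) (simp add: assms)
  also have "\<dots> = (\<Sum>r::'n\<in>UNIV. \<Sum>j\<in>-{r}. of_nat (card (-{r}-{j})) * c)"
    unfolding T_def sum_distinct_triples_eq_sum_if[symmetric] by simp
  also have "\<dots> = (\<Sum>r::'n\<in>UNIV. \<Sum>j\<in>-{r}. of_nat (CARD('n) - 2) * c)"
    by (intro sum.cong refl) (simp add: Compl_eq_Diff_UNIV card_Diff_singleton numeral_2_eq_2)
  finally show ?thesis
    by (simp add: Compl_eq_Diff_UNIV card_Diff_singleton mult_ac)
qed

section \<open>Rational identities for the Joukowski map\<close>

definition joukowski :: "'a::division_ring \<Rightarrow> 'a" where
  "joukowski a = a + inverse a"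

(* For a = exp (i theta), (a + 1) / (2 (a - 1)) = -(i/2) cot (theta/2). *)
lemma half_cot_square:
  fixes a :: "'a::field_char_0"
  assumes "a \<noteq> 1"
  shows "((a + 1) / (2 * (a - 1)))^2 = 1/4 + a / (a - 1)^2"
proof -
  have "a - 1 \<noteq> 0" using assms by simp
  then show ?thesis by (simp add: divide_simps assms) algebra
qed

lemma joukowski_diff_square:
  fixes a :: "'a::field"
  assumes "a \<noteq> 0"
  shows "(a - inverse a)^2 = joukowski a ^ 2 - 4"
  using assms by (simp add: joukowski_def power2_eq_square field_simps)

lemma joukowski_neqD:
  fixes a b :: "'a::field"
  assumes "joukowski a \<noteq> joukowski b"
  shows "a \<noteq> b" and "a * b \<noteq> 1"
proof -
  show "a \<noteq> b" using assms by auto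
  show "a * b \<noteq> 1"
  proof
    assume "a * b = 1"
    then have "b = inverse a" and "a = inverse b"
      by (simp_all add: inverse_unique mult.commute flip: inverse_unique)
    then show False using assms by (simp add: joukowski_def add.commute)
  qed
qed

lemma joukowski_diff:
  fixes a b :: "'a::field"
  assumes "a \<noteq> 0" "b \<noteq> 0"
  shows "joukowski a - joukowski b = (a - b) * (a * b - 1) / (a * b)"
  using assms by (simp add: joukowski_def field_simps)

lemma cot_joukowski_pair:
  fixes a b :: "'a::field_char_0"
  assumes "a \<noteq> 0" "b \<noteq> 0" "a \<noteq> 1" "b \<noteq> 1" "joukowski a \<noteq> joukowski b"
  shows "(a + 1) / (2 * (a - 1)) * ((a - inverse a) / (joukowski a - joukowski b))
       + (b + 1) / (2 * (b - 1)) * ((b - inverse b) / (joukowski b - joukowski a)) = 1/2"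
proof -
  have "a \<noteq> b" "b \<noteq> a" "a * b \<noteq> 1" "b * a \<noteq> 1"
    using joukowski_neqD[OF assms(5)] by (auto simp: mult.commute)
  note nz = this assms(1-4)
  show ?thesis
    unfolding joukowski_diff[OF assms(1,2)] joukowski_diff[OF assms(2,1)]
    by (simp add: divide_simps nz) algebra
qed

lemma divide_pair_sum_one:
  fixes p q :: "'a::field"
  assumes "p \<noteq> q"
  shows "p / (p - q) + q / (q - p) = 1"
proof -
  have "q \<noteq> p" using assms by simp
  note nz = this assms
  show ?thesis by (simp add: divide_simps nz) algebra
qed

lemma joukowski_square_pair:
  fixes a b :: "'a::field_char_0"
  assumes "a \<noteq> 0" "b \<noteq> 0" "joukowski a \<noteq> joukowski b"
  shows "(a - inverse a)^2 / (joukowski a - joukowski b)^2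
       + (b - inverse b)^2 / (joukowski b - joukowski a)^2
       = 2 * (a * b / (a - b)^2 + a * b / (a * b - 1)^2) + 1"
proof -
  have "a \<noteq> b" "b \<noteq> a" "a * b \<noteq> 1" "b * a \<noteq> 1"
    using joukowski_neqD[OF assms(3)] by (auto simp: mult.commute)
  note nz = this assms(1,2)
  show ?thesis
    unfolding joukowski_diff[OF assms(1,2)] joukowski_diff[OF assms(2,1)]
    by (simp add: divide_simps nz) algebra
qed

(* The leading coefficient of the monic quadratic p^2 - 4, read off from its Lagrange
   interpolation at three nodes. *)
lemma lagrange_triple:
  fixes p q r :: "'a::field"
  assumes "p \<noteq> q" "p \<noteq> r" "q \<noteq> r"
  shows "(p^2 - 4) / ((p - q) * (p - r)) + (q^2 - 4) / ((q - r) * (q - p))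
       + (r^2 - 4) / ((r - p) * (r - q)) = 1"
proof -
  have "q \<noteq> p" "r \<noteq> p" "r \<noteq> q" using assms by auto
  note nz = this assms
  show ?thesis by (simp add: divide_simps nz) algebra
qed

section \<open>The sum of the second logarithmic Euler derivatives\<close>

(* The points at which every factor of phi is nonzero. *)
definition nondegenerate :: "('n \<Rightarrow> 'a::field) \<Rightarrow> bool" where
  "nondegenerate x \<longleftrightarrow>
     (\<forall>k. x k \<noteq> 0 \<and> x k \<noteq> 1) \<and> (\<forall>i j. i \<noteq> j \<longrightarrow> joukowski (x i) \<noteq> joukowski (x j))"

(* At x = z these are theta_r (log phi) and theta_r (theta_r (log phi)), where theta_r is the
   Euler operator z_r d/dz_r. *)
definition euler_log_phi :: "'a \<Rightarrow> 'a \<Rightarrow> ('n::finite \<Rightarrow> 'a::field) \<Rightarrow> 'n \<Rightarrow> 'a" where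
  "euler_log_phi mu1 mu2 x r =
     mu1 * ((x r + 1) / (2 * (x r - 1)))
     + mu2 * (\<Sum>j\<in>-{r}. (x r - inverse (x r)) / (joukowski (x r) - joukowski (x j)))"

definition euler2_log_phi :: "'a \<Rightarrow> 'a \<Rightarrow> ('n::finite \<Rightarrow> 'a::field) \<Rightarrow> 'n \<Rightarrow> 'a" where
  "euler2_log_phi mu1 mu2 x r =
     - mu1 * (x r / (x r - 1)^2)
     + mu2 * (\<Sum>j\<in>-{r}. joukowski (x r) / (joukowski (x r) - joukowski (x j))
                        - (x r - inverse (x r))^2 / (joukowski (x r) - joukowski (x j))^2)"

lemma sum_half_cot_square:
  fixes x :: "'n::finite \<Rightarrow> 'a::field_char_0"
  assumes "\<And>k. x k \<noteq> 1"
  shows "(\<Sum>r\<in>UNIV. ((x r + 1) / (2 * (x r - 1)))^2)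
       = of_nat CARD('n) / 4 + (\<Sum>r\<in>UNIV. x r / (x r - 1)^2)"
proof -
  have "(\<Sum>r\<in>UNIV. ((x r + 1) / (2 * (x r - 1)))^2) = (\<Sum>r\<in>UNIV. 1/4 + x r / (x r - 1)^2)"
    by (intro sum.cong refl half_cot_square assms)
  then show ?thesis by (simp add: sum.distrib)
qed

lemma sum_cot_times_joukowski_sum:
  fixes x :: "'n::finite \<Rightarrow> 'a::field_char_0"
  assumes "\<And>k. x k \<noteq> 0" "\<And>k. x k \<noteq> 1"
    and "\<And>i j. i \<noteq> j \<Longrightarrow> joukowski (x i) \<noteq> joukowski (x j)"
  shows "(\<Sum>r\<in>UNIV. (x r + 1) / (2 * (x r - 1))
            * (\<Sum>j\<in>-{r}. (x r - inverse (x r)) / (joukowski (x r) - joukowski (x j))))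
       = of_nat (CARD('n) * (CARD('n) - 1)) / 4"
proof -
  have "2 * (\<Sum>r\<in>UNIV. \<Sum>j\<in>-{r}. (x r + 1) / (2 * (x r - 1))
            * ((x r - inverse (x r)) / (joukowski (x r) - joukowski (x j))))
      = of_nat (CARD('n) * (CARD('n) - 1)) * (1 / 2)"
    by (rule sum_offdiag_symmetric, rule cot_joukowski_pair) (auto simp: assms)
  then show ?thesis by (simp add: sum_distrib_left field_simps)
qed

lemma sum_joukowski_ratio:
  fixes x :: "'n::finite \<Rightarrow> 'a::field_char_0"
  assumes "\<And>i j. i \<noteq> j \<Longrightarrow> joukowski (x i) \<noteq> joukowski (x j)"
  shows "(\<Sum>r\<in>UNIV. \<Sum>j\<in>-{r}. joukowski (x r) / (joukowski (x r) - joukowski (x j)))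
       = of_nat (CARD('n) * (CARD('n) - 1)) / 2"
proof -
  have "2 * (\<Sum>r\<in>UNIV. \<Sum>j\<in>-{r}. joukowski (x r) / (joukowski (x r) - joukowski (x j)))
      = of_nat (CARD('n) * (CARD('n) - 1)) * 1"
    by (rule sum_offdiag_symmetric) (rule divide_pair_sum_one, rule assms)
  then show ?thesis by (simp add: field_simps)
qed

lemma card_pairs_less:
  "of_nat (card {(i, j::'n::{finite,linorder}). i < j}) = (of_nat (CARD('n) * (CARD('n) - 1)) / 2 :: 'a::field_char_0)"
proof -
  have "2 * (\<Sum>i::'n\<in>UNIV. \<Sum>j\<in>-{i}. (1/2 :: 'a)) = of_nat (CARD('n) * (CARD('n) - 1)) * 1"
    by (rule sum_offdiag_symmetric) simp
  moreover have "(\<Sum>i::'n\<in>UNIV. \<Sum>j\<in>-{i}. (1/2 :: 'a)) = of_nat (card {(i, j::'n). i < j})"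
    by (simp only: sum_offdiag_eq_sum_pairs) simp
  ultimately show ?thesis by (simp add: field_simps)
qed

lemma sum_joukowski_square_ratio:
  fixes x :: "'n::{finite,linorder} \<Rightarrow> 'a::field_char_0"
  assumes "\<And>k. x k \<noteq> 0"
    and "\<And>i j. i \<noteq> j \<Longrightarrow> joukowski (x i) \<noteq> joukowski (x j)"
  shows "(\<Sum>r\<in>UNIV. \<Sum>j\<in>-{r}. (x r - inverse (x r))^2 / (joukowski (x r) - joukowski (x j))^2)
       = 2 * ((\<Sum>(i, j)\<in>{(i, j). i < j}. x i * x j / (x i - x j)^2)
              + (\<Sum>(i, j)\<in>{(i, j). i < j}. x i * x j / (x i * x j - 1)^2))
         + of_nat (CARD('n) * (CARD('n) - 1)) / 2"
proof -
  have "(\<Sum>r\<in>UNIV. \<Sum>j\<in>-{r}. (x r - inverse (x r))^2 / (joukowski (x r) - joukowski (x j))^2)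
      = (\<Sum>(i, j)\<in>{(i, j). i < j}. 2 * (x i * x j / (x i - x j)^2 + x i * x j / (x i * x j - 1)^2) + 1)"
    unfolding sum_offdiag_eq_sum_pairs
    by (intro sum.cong refl) (auto simp: joukowski_square_pair assms)
  also have "\<dots> = 2 * ((\<Sum>(i, j)\<in>{(i, j). i < j}. x i * x j / (x i - x j)^2)
              + (\<Sum>(i, j)\<in>{(i, j). i < j}. x i * x j / (x i * x j - 1)^2))
         + of_nat (card {(i, j::'n). i < j})"
    by (simp add: sum.distrib sum_distrib_left case_prod_unfold)
  finally show ?thesis by (simp add: card_pairs_less)
qed

lemma sum_square_joukowski_sum:
  fixes x :: "'n::finite \<Rightarrow> 'a::field_char_0"
  assumes "\<And>k. x k \<noteq> 0"
    and "\<And>i j. i \<noteq> j \<Longrightarrow> joukowski (x i) \<noteq> joukowski (x j)"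
  shows "(\<Sum>r\<in>UNIV. (\<Sum>j\<in>-{r}. (x r - inverse (x r)) / (joukowski (x r) - joukowski (x j)))^2)
       = (\<Sum>r\<in>UNIV. \<Sum>j\<in>-{r}. (x r - inverse (x r))^2 / (joukowski (x r) - joukowski (x j))^2)
         + of_nat (CARD('n) * (CARD('n) - 1) * (CARD('n) - 2)) / 3"
proof -
  define F where "F r j k = (x r - inverse (x r))^2
      / ((joukowski (x r) - joukowski (x j)) * (joukowski (x r) - joukowski (x k)))" for r j k
  have "3 * (\<Sum>r\<in>UNIV. \<Sum>j\<in>-{r}. \<Sum>k\<in>-{r}-{j}. F r j k)
      = of_nat (CARD('n) * (CARD('n) - 1) * (CARD('n) - 2)) * 1"
  proof (rule sum_distinct_triples_cyclic)
    fix r j k :: 'n assume "r \<noteq> j" "r \<noteq> k" "j \<noteq> k"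
    then show "F r j k + F j k r + F k r j = 1"
      unfolding F_def joukowski_diff_square[OF assms(1)]
      by (intro lagrange_triple assms(2))
  qed
  moreover have "(\<Sum>j\<in>-{r}. (x r - inverse (x r)) / (joukowski (x r) - joukowski (x j)))^2
      = (\<Sum>j\<in>-{r}. (x r - inverse (x r))^2 / (joukowski (x r) - joukowski (x j))^2)
        + (\<Sum>j\<in>-{r}. \<Sum>k\<in>-{r}-{j}. F r j k)" for r :: 'n
    unfolding power2_sum_offdiag[OF finite] F_def by (simp add: power_divide power2_eq_square)
  ultimately show ?thesis by (simp add: sum.distrib field_simps)
qed

lemma sum_euler_log_phi_expand:
  fixes x :: "'n::{finite,linorder} \<Rightarrow> 'a::field_char_0"
  assumes nonzero: "\<And>k. x k \<noteq> 0" and ne_one: "\<And>k. x k \<noteq> 1"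
    and joukowski_inj: "\<And>i j. i \<noteq> j \<Longrightarrow> joukowski (x i) \<noteq> joukowski (x j)"
  defines "N \<equiv> CARD('n)" and "E \<equiv> (\<Sum>r\<in>UNIV. x r / (x r - 1)^2)"
    and "P \<equiv> (\<Sum>(i, j)\<in>{(i, j). i < j}. x i * x j / (x i - x j)^2)
             + (\<Sum>(i, j)\<in>{(i, j). i < j}. x i * x j / (x i * x j - 1)^2)"
  shows "(\<Sum>r\<in>UNIV. euler_log_phi mu1 mu2 x r ^ 2 + euler2_log_phi mu1 mu2 x r)
       = mu1^2 * (of_nat N / 4 + E) + 2 * mu1 * mu2 * (of_nat (N * (N - 1)) / 4)
         + mu2^2 * (2 * P + of_nat (N * (N - 1)) / 2 + of_nat (N * (N - 1) * (N - 2)) / 3)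
         - mu1 * E + mu2 * (of_nat (N * (N - 1)) / 2) - mu2 * (2 * P + of_nat (N * (N - 1)) / 2)"
proof -
  define A where "A r = (x r + 1) / (2 * (x r - 1))" for r
  define S where "S r = (\<Sum>j\<in>-{r}. (x r - inverse (x r)) / (joukowski (x r) - joukowski (x j)))" for r
  define W where "W r = (\<Sum>j\<in>-{r}. joukowski (x r) / (joukowski (x r) - joukowski (x j)))" for r
  define Q where "Q r = (\<Sum>j\<in>-{r}. (x r - inverse (x r))^2 / (joukowski (x r) - joukowski (x j))^2)" for r
  have "euler_log_phi mu1 mu2 x r ^ 2 + euler2_log_phi mu1 mu2 x r
      = mu1^2 * A r ^ 2 + 2 * mu1 * mu2 * (A r * S r) + mu2^2 * S r ^ 2
        - mu1 * (x r / (x r - 1)^2) + mu2 * W r - mu2 * Q r" for r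
    by (simp add: euler_log_phi_def euler2_log_phi_def A_def S_def W_def Q_def
        sum_subtractf power2_eq_square algebra_simps)
  then have "(\<Sum>r\<in>UNIV. euler_log_phi mu1 mu2 x r ^ 2 + euler2_log_phi mu1 mu2 x r)
      = mu1^2 * (\<Sum>r\<in>UNIV. A r ^ 2) + 2 * mu1 * mu2 * (\<Sum>r\<in>UNIV. A r * S r)
        + mu2^2 * (\<Sum>r\<in>UNIV. S r ^ 2) - mu1 * E + mu2 * (\<Sum>r\<in>UNIV. W r) - mu2 * (\<Sum>r\<in>UNIV. Q r)"
    by (simp add: E_def sum.distrib sum_subtractf sum_distrib_left)
  also have "(\<Sum>r\<in>UNIV. A r ^ 2) = of_nat N / 4 + E"
    unfolding A_def E_def N_def by (rule sum_half_cot_square[OF ne_one])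
  also have "(\<Sum>r\<in>UNIV. A r * S r) = of_nat (N * (N - 1)) / 4"
    unfolding A_def S_def N_def by (rule sum_cot_times_joukowski_sum[OF nonzero ne_one joukowski_inj])
  also have "(\<Sum>r\<in>UNIV. W r) = of_nat (N * (N - 1)) / 2"
    unfolding W_def N_def by (rule sum_joukowski_ratio[OF joukowski_inj])
  also have "(\<Sum>r\<in>UNIV. S r ^ 2) = (\<Sum>r\<in>UNIV. Q r) + of_nat (N * (N - 1) * (N - 2)) / 3"
    unfolding S_def Q_def N_def by (rule sum_square_joukowski_sum[OF nonzero joukowski_inj])
  also have "(\<Sum>r\<in>UNIV. Q r) = 2 * P + of_nat (N * (N - 1)) / 2"
    unfolding Q_def P_def N_def by (rule sum_joukowski_square_ratio[OF nonzero joukowski_inj])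
  finally show ?thesis .
qed

lemma sum_euler_log_phi_identity:
  fixes x :: "'n::{finite,linorder} \<Rightarrow> 'a::field_char_0"
  assumes "nondegenerate x"
  shows "(\<Sum>r\<in>UNIV. euler_log_phi mu1 mu2 x r ^ 2 + euler2_log_phi mu1 mu2 x r)
         + (mu1 * (1 - mu1) * (\<Sum>r\<in>UNIV. x r / (x r - 1)^2)
            + 2 * mu2 * (1 - mu2) *
              ((\<Sum>(i, j)\<in>{(i, j). i < j}. x i * x j / (x i - x j)^2)
               + (\<Sum>(i, j)\<in>{(i, j). i < j}. x i * x j / (x i * x j - 1)^2)))
       = of_nat CARD('n) * mu1^2 / 4
          + of_nat (CARD('n) * (CARD('n) - 1)) / 2 * mu1 * mu2
          + of_nat (CARD('n) * (CARD('n) - 1) * (2 * CARD('n) - 1)) * mu2^2 / 6"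
proof -
  define N where "N = CARD('n)"
  define E where "E = (\<Sum>r\<in>UNIV. x r / (x r - 1)^2)"
  define P where "P = (\<Sum>(i, j)\<in>{(i, j). i < j}. x i * x j / (x i - x j)^2)
                      + (\<Sum>(i, j)\<in>{(i, j). i < j}. x i * x j / (x i * x j - 1)^2)"
  define n2 n3 :: 'a where "n2 = of_nat (N * (N - 1))" and "n3 = of_nat (N * (N - 1) * (N - 2))"
  have expand: "(\<Sum>r\<in>UNIV. euler_log_phi mu1 mu2 x r ^ 2 + euler2_log_phi mu1 mu2 x r)
      = mu1^2 * (of_nat N / 4 + E) + 2 * mu1 * mu2 * (n2 / 4) + mu2^2 * (2 * P + n2 / 2 + n3 / 3)
        - mu1 * E + mu2 * (n2 / 2) - mu2 * (2 * P + n2 / 2)"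
    unfolding N_def E_def P_def n2_def n3_def
    by (rule sum_euler_log_phi_expand) (use assms in \<open>auto simp: nondegenerate_def\<close>)
  have "N * (N - 1) * (2 * N - 1) = 3 * (N * (N - 1)) + 2 * (N * (N - 1) * (N - 2))"
    by (cases N; cases "N - 1") (simp_all add: algebra_simps)
  then have count: "of_nat (N * (N - 1) * (2 * N - 1)) = 3 * n2 + 2 * n3"
    unfolding n2_def n3_def by (metis of_nat_add of_nat_mult of_nat_numeral)
  show ?thesis
    unfolding E_def[symmetric] P_def[symmetric] N_def[symmetric] expand count n2_def[symmetric]
    by (simp add: field_simps power2_eq_square)
qed

section \<open>Differentiating logarithms along coordinate lines\<close>

lemma has_field_derivative_half_cot:
  fixes t :: complex
  assumes "t \<noteq> 0" "t \<noteq> 1"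
  shows "((\<lambda>s. (s + 1) / (2 * (s - 1))) has_field_derivative - (t / (t - 1)^2) / t) (at t)"
proof -
  have "t - 1 \<noteq> 0" using assms by simp
  then show ?thesis using assms
    by (auto intro!: derivative_eq_intros simp: divide_simps power2_eq_square) (simp add: algebra_simps)
qed

lemma has_field_derivative_joukowski:
  fixes t :: complex
  assumes "t \<noteq> 0"
  shows "(joukowski has_field_derivative (t - inverse t) / t) (at t)"
  unfolding joukowski_def[abs_def] using assms
  by (auto intro!: derivative_eq_intros simp: field_simps power2_eq_square)

lemma has_field_derivative_joukowski_ratio:
  fixes t c :: complex
  assumes "t \<noteq> 0" "joukowski t \<noteq> c"
  shows "((\<lambda>s. (s - inverse s) / (joukowski s - c)) has_field_derivative
           (joukowski t / (joukowski t - c) - (t - inverse t)^2 / (joukowski t - c)^2) / t) (at t)"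
proof -
  have num: "((\<lambda>s. s - inverse s) has_field_derivative joukowski t / t) (at t)"
    using assms(1) unfolding joukowski_def
    by (auto intro!: derivative_eq_intros simp: field_simps power2_eq_square)
  have denom: "((\<lambda>s. joukowski s - c) has_field_derivative (t - inverse t) / t) (at t)"
    using has_field_derivative_joukowski[OF assms(1)] by (auto intro!: derivative_eq_intros)
  have "((\<lambda>s. (s - inverse s) / (joukowski s - c)) has_field_derivative
      (joukowski t / t * (joukowski t - c) - (t - inverse t) * ((t - inverse t) / t))
        / ((joukowski t - c) * (joukowski t - c))) (at t)"
    using DERIV_divide[OF num denom] assms(2) by simp
  moreover have "(joukowski t / t * (joukowski t - c) - (t - inverse t) * ((t - inverse t) / t))
        / ((joukowski t - c) * (joukowski t - c))
      = (joukowski t / (joukowski t - c) - (t - inverse t)^2 / (joukowski t - c)^2) / t"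
    by (simp add: divide_simps assms) algebra
  ultimately show ?thesis by simp
qed

lemma has_field_derivative_euler_log_phi_update:
  fixes x :: "'n::finite \<Rightarrow> complex"
  assumes "x r \<noteq> 0" "x r \<noteq> 1" "\<And>j. j \<noteq> r \<Longrightarrow> joukowski (x r) \<noteq> joukowski (x j)"
  shows "((\<lambda>t. euler_log_phi mu1 mu2 (x(r := t)) r) has_field_derivative
           euler2_log_phi mu1 mu2 x r / x r) (at (x r))"
proof -
  have "euler_log_phi mu1 mu2 (x(r := t)) r
      = mu1 * ((t + 1) / (2 * (t - 1)))
        + mu2 * (\<Sum>j\<in>-{r}. (t - inverse t) / (joukowski t - joukowski (x j)))" for t
    unfolding euler_log_phi_def by (auto intro!: sum.cong)
  moreover have "((\<lambda>t. mu1 * ((t + 1) / (2 * (t - 1)))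
        + mu2 * (\<Sum>j\<in>-{r}. (t - inverse t) / (joukowski t - joukowski (x j))))
      has_field_derivative
        mu1 * (- (x r / (x r - 1)^2) / x r)
        + mu2 * (\<Sum>j\<in>-{r}. (joukowski (x r) / (joukowski (x r) - joukowski (x j))
                     - (x r - inverse (x r))^2 / (joukowski (x r) - joukowski (x j))^2) / x r))
      (at (x r))"
    using assms by (intro DERIV_add DERIV_cmult DERIV_sum has_field_derivative_half_cot
        has_field_derivative_joukowski_ratio) auto
  moreover have "mu1 * (- (x r / (x r - 1)^2) / x r)
        + mu2 * (\<Sum>j\<in>-{r}. (joukowski (x r) / (joukowski (x r) - joukowski (x j))
                     - (x r - inverse (x r))^2 / (joukowski (x r) - joukowski (x j))^2) / x r)
      = euler2_log_phi mu1 mu2 x r / x r"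
    unfolding euler2_log_phi_def sum_divide_distrib[symmetric]
    using assms(1) by (simp add: add_divide_distrib diff_divide_distrib)
  ultimately show ?thesis by simp
qed

lemma has_field_derivative_continuous_log:
  fixes h g :: "complex \<Rightarrow> complex"
  assumes h: "isCont h t" and exp_h: "\<forall>\<^sub>F s in nhds t. exp (h s) = g s"
    and g: "(g has_field_derivative g') (at t)"
  shows "(h has_field_derivative g' / g t) (at t)"
proof -
  have exp_h_t: "exp (h t) = g t" using eventually_nhds_x_imp_x[OF exp_h] .
  then have "g t \<noteq> 0" by (metis exp_not_eq_zero)
  define l where "l w = h t + Ln (w / g t)" for w
  have l: "(l has_field_derivative inverse (g t)) (at (g t))"
    unfolding l_def using \<open>g t \<noteq> 0\<close> by (auto intro!: derivative_eq_intros simp: field_simps)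
  have lg: "((\<lambda>s. l (g s)) has_field_derivative g' / g t) (at t)"
    using DERIV_chain2[OF l g] by (simp add: field_simps)
  have "((\<lambda>s. h s - l (g s)) \<longlongrightarrow> h t - l (g t)) (at t)"
    using h DERIV_isCont[OF lg] by (intro tendsto_diff) (simp_all add: isCont_def)
  moreover have "h t - l (g t) = 0" unfolding l_def using \<open>g t \<noteq> 0\<close> by simp
  ultimately have "\<forall>\<^sub>F s in at t. norm (h s - l (g s)) < 2 * pi"
    by (auto simp: tendsto_iff dist_norm)
  then have close: "\<forall>\<^sub>F s in nhds t. norm (h s - l (g s)) < 2 * pi"
    using \<open>h t - l (g t) = 0\<close> by (simp add: eventually_nhds_conv_at)
  \<comment> \<open>h and l \<circ> g are logarithms of g differing by less than 2\<pi>, hence they agree near t\<close>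
  have "\<forall>\<^sub>F s in nhds t. h s = l (g s)"
    using close exp_h
  proof eventually_elim
    case (elim s)
    then have "g s \<noteq> 0" by (metis exp_not_eq_zero)
    then have "exp (h s) = exp (l (g s))"
      using elim(2) exp_h_t \<open>g t \<noteq> 0\<close> by (simp add: l_def exp_add)
    then obtain n :: int where n: "h s = l (g s) + of_int (2 * n) * pi * \<i>"
      by (auto simp: exp_eq)
    then have "\<bar>2 * real_of_int n\<bar> * pi < 2 * pi"
      using elim(1) by (simp add: norm_mult abs_mult)
    then have "n = 0" by (simp add: abs_mult)
    then show ?case using n by simp
  qed
  then show ?thesis by (rule DERIV_cong_ev[OF refl _ refl, THEN iffD2, OF _ lg])
qed

lemma isCont_eventually_in_open:
  assumes "isCont f x" "open U" "f x \<in> U"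
  shows "\<forall>\<^sub>F y in nhds x. f y \<in> U"
proof -
  have "(f \<longlongrightarrow> f x) (nhds x)"
    using assms(1) by (simp add: isCont_def tendsto_at_iff_tendsto_nhds)
  then show ?thesis using assms(2,3) by (rule topological_tendstoD)
qed

lemma has_field_derivative_continuous_log_compose:
  fixes h q :: "'a::t2_space \<Rightarrow> complex" and \<gamma> :: "complex \<Rightarrow> 'a"
  assumes "open U" "continuous_on U h" "\<And>y. y \<in> U \<Longrightarrow> exp (h y) = q y"
    and "isCont \<gamma> t" "\<gamma> t \<in> U" "((\<lambda>s. q (\<gamma> s)) has_field_derivative D) (at t)"
  shows "((\<lambda>s. h (\<gamma> s)) has_field_derivative D / q (\<gamma> t)) (at t)"
proof (rule has_field_derivative_continuous_log)
  have "\<forall>\<^sub>F s in nhds t. \<gamma> s \<in> U"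
    using assms(4,1,5) by (rule isCont_eventually_in_open)
  then show "\<forall>\<^sub>F s in nhds t. exp (h (\<gamma> s)) = q (\<gamma> s)"
    by (rule eventually_mono) (rule assms(3))
  have "isCont h (\<gamma> t)"
    using assms(1,2,5) continuous_on_eq_continuous_at by blast
  then show "isCont (\<lambda>s. h (\<gamma> s)) t"
    using assms(4) by (rule isCont_o2[rotated])
qed (rule assms(6))

lemma euler_euler_exp:
  fixes g b :: "complex \<Rightarrow> complex"
  assumes "t0 \<noteq> 0" and g: "\<forall>\<^sub>F t in nhds t0. (g has_field_derivative b t / t) (at t)"
    and b: "(b has_field_derivative b') (at t0)"
  shows "t0 * deriv (\<lambda>t. t * deriv (\<lambda>s. exp (g s)) t) t0 = exp (g t0) * (b t0 ^ 2 + t0 * b')"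
proof -
  have "\<forall>\<^sub>F t in nhds t0. t \<noteq> 0"
    using eventually_nhds_in_open[of "-{0}" t0] assms(1) by auto
  with g have "\<forall>\<^sub>F t in nhds t0. t * deriv (\<lambda>s. exp (g s)) t = exp (g t) * b t"
  proof eventually_elim
    case (elim t)
    have "deriv (\<lambda>s. exp (g s)) t = exp (g t) * (b t / t)"
      by (rule DERIV_imp_deriv, rule DERIV_chain2[OF DERIV_exp elim(1)])
    then show ?case using elim(2) by simp
  qed
  then have "deriv (\<lambda>t. t * deriv (\<lambda>s. exp (g s)) t) t0 = deriv (\<lambda>t. exp (g t) * b t) t0"
    by (rule deriv_cong_ev) simp
  also have "\<dots> = exp (g t0) * (b t0 / t0) * b t0 + exp (g t0) * b'"
    using eventually_nhds_x_imp_x[OF g] b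
    by (intro DERIV_imp_deriv) (auto intro!: derivative_eq_intros)
  finally show ?thesis using assms(1) by (simp add: field_simps power2_eq_square)
qed

lemma vupd_nth [simp]: "vupd z r t $ k = (if k = r then t else z $ k)"
  by (simp add: vupd_def)

lemma vec_nth_vupd: "vec_nth (vupd z r t) = (vec_nth z)(r := t)"
  by (simp add: fun_eq_iff)

lemma vupd_vupd [simp]: "vupd (vupd z r t) r s = vupd z r s"
  by (simp add: vec_eq_iff)

lemma vupd_triv [simp]: "vupd z r (z $ r) = z"
  by (simp add: vec_eq_iff)

lemma isCont_vupd: "isCont (vupd z r) t"
  unfolding vupd_def isCont_def
  by (rule tendsto_vec_lambda) (auto intro: tendsto_ident_at)

lemma euler_op_vupd: "euler_op r F (vupd z r t) = t * deriv (\<lambda>s. F (vupd z r s)) t"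
  by (simp add: euler_op_def pdiff_def)

lemma euler_op_euler_op:
  "euler_op r (euler_op r F) z = z $ r * deriv (\<lambda>t. t * deriv (\<lambda>s. F (vupd z r s)) t) (z $ r)"
  by (simp add: euler_op_def[of r "euler_op r F"] pdiff_def euler_op_vupd)

lemma has_field_derivative_joukowski_coordinate:
  fixes z :: "complex^'n::finite"
  assumes "z $ r \<noteq> 0"
  shows "((\<lambda>s. joukowski (vupd z r s $ k)) has_field_derivative
           (if k = r then (z $ r - inverse (z $ r)) / z $ r else 0)) (at (z $ r))"
  using has_field_derivative_joukowski[OF assms] by (cases "k = r") simp_all

section \<open>Coherent branches\<close>

(* The branch hypotheses of the theorem, except continuity of Lz: L r enters only through
   exp (2 * L r z) = (z_r - 1)^2 / z_r, so the branch of the square root is never differentiated. *)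
locale coherent_branches =
  fixes U :: "(complex^'n::{finite,linorder}) set"
    and Lz L :: "'n \<Rightarrow> complex^('n::{finite,linorder}) \<Rightarrow> complex"
    and M :: "'n \<Rightarrow> 'n \<Rightarrow> complex^('n::{finite,linorder}) \<Rightarrow> complex"
  assumes open_U: "open U"
    and exp_Lz: "\<And>r z. z \<in> U \<Longrightarrow> exp (Lz r z) = z $ r"
    and continuous_L: "\<And>r. continuous_on U (L r)"
    and exp_L: "\<And>r z. z \<in> U \<Longrightarrow>
          exp (L r z) = branch_pow (Lz r z) (1/2) - branch_pow (Lz r z) (-1/2)"
    and continuous_M: "\<And>i j. i < j \<Longrightarrow> continuous_on U (M i j)"
    and exp_M: "\<And>i j z. i < j \<Longrightarrow> z \<in> U \<Longrightarrow>
          exp (M i j z) = z $ i + inverse (z $ i) - z $ j - inverse (z $ j)"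
begin

lemma coordinate_nonzero: "z \<in> U \<Longrightarrow> z $ r \<noteq> 0"
  using exp_Lz by (metis exp_not_eq_zero)

lemma exp_double_L:
  assumes "z \<in> U"
  shows "exp (2 * L r z) = (z $ r - 1)^2 / z $ r"
proof -
  define u where "u = exp (Lz r z / 2)"
  have "u \<noteq> 0" by (simp add: u_def)
  have "u^2 = z $ r"
    using exp_Lz[OF assms] by (simp add: u_def flip: exp_double)
  have "exp (L r z) = u - inverse u"
    using exp_L[OF assms] by (simp add: branch_pow_def u_def exp_minus[symmetric])
  then have "exp (2 * L r z) = (u - inverse u)^2" by (simp add: exp_double)
  also have "\<dots> = (u^2 - 1)^2 / u^2"
    by (simp add: divide_simps \<open>u \<noteq> 0\<close>) algebra
  finally show ?thesis by (simp only: \<open>u^2 = z $ r\<close>)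
qed

lemma coordinate_ne_one: "z \<in> U \<Longrightarrow> z $ r \<noteq> 1"
  using exp_double_L[of z r] by (metis div_0 exp_not_eq_zero power_zero_numeral right_minus_eq)

lemma joukowski_coordinate_inj:
  assumes "z \<in> U" "i \<noteq> j"
  shows "joukowski (z $ i) \<noteq> joukowski (z $ j)"
proof -
  have "joukowski (z $ i) \<noteq> joukowski (z $ j)" if "i < j" for i j
    using exp_M[OF that assms(1)] exp_not_eq_zero[of "M i j z"]
    by (auto simp: joukowski_def algebra_simps)
  then show ?thesis using assms(2) by (metis neq_iff)
qed

lemma nondegenerate_vec_nth: "z \<in> U \<Longrightarrow> nondegenerate (vec_nth z)"
  by (simp add: nondegenerate_def coordinate_nonzero coordinate_ne_one joukowski_coordinate_inj)

lemma has_field_derivative_L_along: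
  assumes "z \<in> U"
  shows "((\<lambda>s. L k (vupd z r s)) has_field_derivative
           (if k = r then (z $ r + 1) / (2 * (z $ r - 1)) else 0) / z $ r) (at (z $ r))"
proof -
  define t where "t = z $ r"
  have "t \<noteq> 0" "t \<noteq> 1"
    using coordinate_nonzero coordinate_ne_one assms by (auto simp: t_def)
  have q: "((\<lambda>s. (vupd z r s $ k - 1)^2 / vupd z r s $ k) has_field_derivative
      (if k = r then (t^2 - 1) / t^2 else 0)) (at t)"
  proof (cases "k = r")
    case True
    have "((\<lambda>s. (s - 1)^2 / s) has_field_derivative (t^2 - 1) / t^2) (at t)"
      using \<open>t \<noteq> 0\<close> by (auto intro!: derivative_eq_intros simp: divide_simps) algebra
    then show ?thesis using True by simp
  qed simp
  have "continuous_on U (\<lambda>y. 2 * L k y)"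
    using continuous_L by (intro continuous_intros)
  from has_field_derivative_continuous_log_compose[OF open_U this exp_double_L isCont_vupd _ q]
  have double_L: "((\<lambda>s. 2 * L k (vupd z r s)) has_field_derivative
      (if k = r then (t^2 - 1) / t^2 else 0) / ((z $ k - 1)^2 / z $ k)) (at t)"
    using assms by (simp add: t_def)
  have halve: "(if k = r then (t^2 - 1) / t^2 else 0) / ((z $ k - 1)^2 / z $ k) / 2
      = (if k = r then (t + 1) / (2 * (t - 1)) else 0) / t"
  proof (cases "k = r")
    case True
    have "z $ r \<noteq> 0" "z $ r \<noteq> 1" using \<open>t \<noteq> 0\<close> \<open>t \<noteq> 1\<close> by (simp_all add: t_def)
    note nz = this
    show ?thesis unfolding t_def by (simp add: divide_simps True nz) algebra
  qed simp
  have "((\<lambda>s. L k (vupd z r s)) has_field_derivative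
      (if k = r then (t + 1) / (2 * (t - 1)) else 0) / t) (at t)"
    using DERIV_cdivide[OF double_L, where c = 2] unfolding halve by simp
  then show ?thesis by (simp only: t_def)
qed

lemma has_field_derivative_M_along:
  fixes i j r :: 'n
  assumes "i < j" "z \<in> U"
  defines "Y \<equiv> (z $ r - inverse (z $ r)) / (joukowski (z $ i) - joukowski (z $ j))"
  shows "((\<lambda>s. M i j (vupd z r s)) has_field_derivative
           ((if i = r then Y else 0) - (if j = r then Y else 0)) / z $ r) (at (z $ r))"
proof -
  have exp_M': "exp (M i j y) = joukowski (y $ i) - joukowski (y $ j)" if "y \<in> U" for y
    using exp_M[OF assms(1) that] by (simp add: joukowski_def algebra_simps)
  have "((\<lambda>s. joukowski (vupd z r s $ i) - joukowski (vupd z r s $ j)) has_field_derivative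
      (if i = r then (z $ r - inverse (z $ r)) / z $ r else 0)
      - (if j = r then (z $ r - inverse (z $ r)) / z $ r else 0)) (at (z $ r))"
    using coordinate_nonzero[OF assms(2)]
    by (intro DERIV_diff has_field_derivative_joukowski_coordinate)
  from has_field_derivative_continuous_log_compose[OF open_U continuous_M[OF assms(1)] exp_M' isCont_vupd _ this]
  show ?thesis
    using assms by (cases "i = r"; cases "j = r") (simp_all add: Y_def mult.commute minus_divide_left)
qed

definition log_phi :: "complex \<Rightarrow> complex \<Rightarrow> complex^('n::{finite,linorder}) \<Rightarrow> complex" where
  "log_phi mu1 mu2 z = mu1 * (\<Sum>r\<in>UNIV. L r z) + mu2 * (\<Sum>(i, j)\<in>{(i, j). i < j}. M i j z)"

lemma has_field_derivative_sum_L_along: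
  assumes "z \<in> U"
  shows "((\<lambda>s. \<Sum>k\<in>UNIV. L k (vupd z r s)) has_field_derivative
           (z $ r + 1) / (2 * (z $ r - 1)) / z $ r) (at (z $ r))"
proof -
  have "((\<lambda>s. \<Sum>k\<in>UNIV. L k (vupd z r s)) has_field_derivative
      (\<Sum>k\<in>UNIV. (if k = r then (z $ r + 1) / (2 * (z $ r - 1)) else 0) / z $ r)) (at (z $ r))"
    using assms by (intro DERIV_sum has_field_derivative_L_along)
  moreover have "(\<Sum>k\<in>UNIV. (if k = r then (z $ r + 1) / (2 * (z $ r - 1)) else 0) / z $ r)
      = (\<Sum>k\<in>UNIV. if k = r then (z $ r + 1) / (2 * (z $ r - 1)) / z $ r else 0)"
    by (intro sum.cong) auto
  ultimately show ?thesis by simp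
qed

lemma has_field_derivative_sum_M_along:
  assumes "z \<in> U"
  shows "((\<lambda>s. \<Sum>(i, j)\<in>{(i, j). i < j}. M i j (vupd z r s)) has_field_derivative
           (\<Sum>j\<in>-{r}. (z $ r - inverse (z $ r)) / (joukowski (z $ r) - joukowski (z $ j))) / z $ r)
           (at (z $ r))"
proof -
  define Y where "Y i j = (z $ r - inverse (z $ r)) / (joukowski (z $ i) - joukowski (z $ j))" for i j
  define D where "D i j = (if i = r then Y i j else 0) - (if j = r then Y i j else 0)" for i j
  have "((\<lambda>s. \<Sum>(i, j)\<in>{(i, j). i < j}. M i j (vupd z r s)) has_field_derivative
      (\<Sum>(i, j)\<in>{(i, j). i < j}. D i j / z $ r)) (at (z $ r))"
  proof (rule DERIV_sum)
    fix p :: "'n \<times> 'n" assume "p \<in> {(i, j). i < j}"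
    then obtain i j where p: "p = (i, j)" "i < j" by auto
    show "((\<lambda>s. case p of (i, j) \<Rightarrow> M i j (vupd z r s)) has_field_derivative
        (case p of (i, j) \<Rightarrow> D i j / z $ r)) (at (z $ r))"
      using has_field_derivative_M_along[OF p(2) assms] by (simp only: p prod.case D_def Y_def)
  qed
  moreover have "(\<Sum>(i, j)\<in>{(i, j). i < j}. D i j) = (\<Sum>j\<in>-{r}. Y r j)"
    unfolding D_def by (rule sum_pairs_less_coordinate) (simp add: Y_def minus_divide_right)
  ultimately show ?thesis
    by (simp add: Y_def sum_divide_distrib[symmetric] case_prod_unfold)
qed

lemma has_field_derivative_log_phi_along:
  assumes "z \<in> U"
  shows "((\<lambda>s. log_phi mu1 mu2 (vupd z r s)) has_field_derivative
           euler_log_phi mu1 mu2 (vec_nth z) r / z $ r) (at (z $ r))"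
proof -
  have combine: "a * (b / t) + c * (d / t) = (a * b + c * d) / t" for a b c d t :: complex
    by (simp add: add_divide_distrib)
  have "((\<lambda>s. log_phi mu1 mu2 (vupd z r s)) has_field_derivative
      mu1 * ((z $ r + 1) / (2 * (z $ r - 1)) / z $ r)
      + mu2 * ((\<Sum>j\<in>-{r}. (z $ r - inverse (z $ r)) / (joukowski (z $ r) - joukowski (z $ j))) / z $ r))
      (at (z $ r))"
    unfolding log_phi_def using assms
    by (intro DERIV_add DERIV_cmult has_field_derivative_sum_L_along has_field_derivative_sum_M_along)
  then show ?thesis
    unfolding euler_log_phi_def combine .
qed

lemma euler_op_euler_op_exp_log_phi:
  assumes "z \<in> U"
  shows "euler_op r (euler_op r (\<lambda>y. exp (log_phi mu1 mu2 y))) z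
       = exp (log_phi mu1 mu2 z)
         * (euler_log_phi mu1 mu2 (vec_nth z) r ^ 2 + euler2_log_phi mu1 mu2 (vec_nth z) r)"
proof -
  define x where "x = vec_nth z"
  have "x r \<noteq> 0" "x r \<noteq> 1" "\<And>j. j \<noteq> r \<Longrightarrow> joukowski (x r) \<noteq> joukowski (x j)"
    using coordinate_nonzero coordinate_ne_one joukowski_coordinate_inj assms by (auto simp: x_def)
  then have euler: "((\<lambda>t. euler_log_phi mu1 mu2 (x(r := t)) r) has_field_derivative
      euler2_log_phi mu1 mu2 x r / x r) (at (x r))"
    by (rule has_field_derivative_euler_log_phi_update)
  have "\<forall>\<^sub>F t in nhds (z $ r). vupd z r t \<in> U"
    using isCont_vupd open_U by (rule isCont_eventually_in_open) (simp add: assms)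
  then have "\<forall>\<^sub>F t in nhds (z $ r). ((\<lambda>s. log_phi mu1 mu2 (vupd z r s)) has_field_derivative
      euler_log_phi mu1 mu2 (x(r := t)) r / t) (at t)"
  proof eventually_elim
    case (elim t)
    from has_field_derivative_log_phi_along[OF this, of mu1 mu2 r]
    show ?case by (simp add: x_def vec_nth_vupd)
  qed
  from euler_euler_exp[OF coordinate_nonzero[OF assms] this] euler
  show ?thesis
    using \<open>x r \<noteq> 0\<close> by (simp add: euler_op_euler_op x_def)
qed

end

theorem theorem6p5:
  fixes mu1 mu2 :: complex
    and U :: "(complex^('n::{finite,linorder})) set"
    and Lz :: "'n \<Rightarrow> complex^('n::{finite,linorder}) \<Rightarrow> complex"
    and L :: "'n \<Rightarrow> complex^('n::{finite,linorder}) \<Rightarrow> complex"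
    and M :: "'n \<Rightarrow> 'n \<Rightarrow> complex^('n::{finite,linorder}) \<Rightarrow> complex"
    and phi :: "complex^('n::{finite,linorder}) \<Rightarrow> complex"
  assumes "open U"
    and "\<And>r. continuous_on U (Lz r)"
    and "\<And>r z. z \<in> U \<Longrightarrow> exp (Lz r z) = z $ r"
    and "\<And>r. continuous_on U (L r)"
    and "\<And>r z. z \<in> U \<Longrightarrow>
           exp (L r z) = branch_pow (Lz r z) (1/2) - branch_pow (Lz r z) (-1/2)"
    and "\<And>i j. i < j \<Longrightarrow> continuous_on U (M i j)"
    and "\<And>i j z. i < j \<Longrightarrow> z \<in> U \<Longrightarrow>
           exp (M i j z) = z $ i + inverse (z $ i) - z $ j - inverse (z $ j)"
    and "\<And>z. phi z = (\<Prod>r\<in>UNIV. branch_pow (L r z) mu1) *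
                      (\<Prod>(i, j)\<in>{(i, j). i < j}. branch_pow (M i j z) mu2)"
    and "z \<in> U"
  shows "(\<Sum>r\<in>UNIV. euler_op r (euler_op r phi) z)
         + (mu1 * (1 - mu1) * (\<Sum>r\<in>UNIV. z $ r / (z $ r - 1)^2)
            + 2 * mu2 * (1 - mu2) *
              ((\<Sum>(i, j)\<in>{(i, j). i < j}. z $ i * z $ j / (z $ i - z $ j)^2)
               + (\<Sum>(i, j)\<in>{(i, j). i < j}. z $ i * z $ j / (z $ i * z $ j - 1)^2))) * phi z
       = (of_nat CARD('n) * mu1^2 / 4
          + of_nat (CARD('n) * (CARD('n) - 1)) / 2 * mu1 * mu2
          + of_nat (CARD('n) * (CARD('n) - 1) * (2 * CARD('n) - 1)) * mu2^2 / 6) * phi z"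
proof -
  interpret coherent_branches U Lz L M
    using assms(1,3-7) by unfold_locales
  have phi: "phi = (\<lambda>y. exp (log_phi mu1 mu2 y))"
    using assms(8)
    by (simp add: fun_eq_iff log_phi_def branch_pow_def exp_add exp_sum sum_distrib_left case_prod_unfold)
  have sum_euler: "(\<Sum>r\<in>UNIV. euler_op r (euler_op r phi) z)
      = phi z * (\<Sum>r\<in>UNIV. euler_log_phi mu1 mu2 (vec_nth z) r ^ 2 + euler2_log_phi mu1 mu2 (vec_nth z) r)"
    unfolding phi by (simp add: euler_op_euler_op_exp_log_phi assms(9) sum_distrib_left)
  note identity = sum_euler_log_phi_identity[OF nondegenerate_vec_nth[OF assms(9)]]
  show ?thesis
    unfolding sum_euler identity[symmetric] by (simp add: distrib_left mult.commute)
qed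

end
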